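(* There is a constant $c>0$ such that for every interval graph $G=(V,E)$ with $N=|V|\ge 2$ nodes, labeled $v_0,\dots,v_{N-1}$ in increasing order of the left endpoints of their intervals, the minimal $\pi$-OBDD representing $\chi_E$ has at most $c\,N\log N$ nodes, where $\pi$ is the $2$-interleaved variable order with decreasing significance.
   Context: An interval graph on $N$ nodes is given by intervals $[a_i,b_i]$ with $a_i<b_i$, $0\le i\le N-1$; two distinct nodes are adjacent iff their intervals intersect. Without loss of generality all $2N$ endpoints are distinct, so the left endpoints determine a unique labeling $v_0,\dots,v_{N-1}$ with $a_0<a_1<\dots<a_{N-1}$. Let $n=\lceil\log_2 N\rceil$. For $x=(x_0,\dots,x_{n-1})\in\{0,1\}^n$ put $|x|=\sum_{i=0}^{n-1}x_i2^i$. The characteristic function $\chi_E:\{0,1\}^{2n}\to\{0,1\}$ is defined by $\chi_E(x,y)=1$ iff $|x|,|y|<N$ and $\{v_{|x|},v_{|y|}\}\in E$. A $\pi$-OBDD for a variable order $\pi$ (a linear order of the input variables) is a directed acyclic rooted graph with two sinks labeled $0$ and $1$. Every inner node is labeled by a variable and has two outgoing edges labeled $0$ and $1$, and along every edge the variables respect $\pi$. An assignment determines a path from the root by following, at each node labeled $x_i$, the edge labeled by the value of $x_i$. The OBDD represents $f$ if this path always ends in the sink labeled $f(\text{assignment})$. The size of an OBDD is its number of nodes. The $2$-interleaved variable order with decreasing significance on $x,y\in\{0,1\}^n$ is $(x_{n-1},y_{n-1},x_{n-2},y_{n-2},\dots,x_0,y_0)$. *)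

theory Defs
  imports Complex_Main
begin

text \<open>A node u with obdd_var B u = None is a sink labelled obdd_sink B u; a node with
obdd_var B u = Some v is an inner node labelled by variable v with 0-successor
obdd_lo B u and 1-successor obdd_hi B u.\<close>

record obdd =
  obdd_nodes :: "nat set"
  obdd_root :: nat
  obdd_var :: "nat \<Rightarrow> nat option"
  obdd_lo :: "nat \<Rightarrow> nat"
  obdd_hi :: "nat \<Rightarrow> nat"
  obdd_sink :: "nat \<Rightarrow> bool"

definition is_pi_obdd :: "nat list \<Rightarrow> obdd \<Rightarrow> bool" where
  "is_pi_obdd vo B \<longleftrightarrow>
     distinct vo \<and>
     finite (obdd_nodes B) \<and> obdd_root B \<in> obdd_nodes B \<and>
     (\<forall>u\<in>obdd_nodes B. \<forall>w\<in>obdd_nodes B.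
        obdd_var B u = None \<and> obdd_var B w = None \<and> obdd_sink B u = obdd_sink B w \<longrightarrow> u = w) \<and>
     (\<forall>u\<in>obdd_nodes B. \<forall>v. obdd_var B u = Some v \<longrightarrow>
        v \<in> set vo \<and> obdd_lo B u \<in> obdd_nodes B \<and> obdd_hi B u \<in> obdd_nodes B \<and>
        (\<forall>w\<in>{obdd_lo B u, obdd_hi B u}. \<forall>v'. obdd_var B w = Some v' \<longrightarrow>
            (\<exists>i j. i < j \<and> j < length vo \<and> vo ! i = v \<and> vo ! j = v')))"

inductive obdd_reach :: "obdd \<Rightarrow> (nat \<Rightarrow> bool) \<Rightarrow> nat \<Rightarrow> bool \<Rightarrow> bool" where
  sink: "obdd_var B u = None \<Longrightarrow> obdd_reach B a u (obdd_sink B u)"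
| inner: "obdd_var B u = Some v \<Longrightarrow>
          obdd_reach B a (if a v then obdd_hi B u else obdd_lo B u) r \<Longrightarrow>
          obdd_reach B a u r"

definition obdd_represents :: "obdd \<Rightarrow> ((nat \<Rightarrow> bool) \<Rightarrow> bool) \<Rightarrow> bool" where
  "obdd_represents B f \<longleftrightarrow> (\<forall>a. obdd_reach B a (obdd_root B) (f a))"

definition obdd_size :: "obdd \<Rightarrow> nat" where
  "obdd_size B = card (obdd_nodes B)"

definition min_obdd_size :: "nat list \<Rightarrow> ((nat \<Rightarrow> bool) \<Rightarrow> bool) \<Rightarrow> nat" where
  "min_obdd_size vo f = (LEAST s. \<exists>B. is_pi_obdd vo B \<and> obdd_represents B f \<and> obdd_size B = s)"

definition interval_rep :: "nat \<Rightarrow> (nat \<Rightarrow> real) \<Rightarrow> (nat \<Rightarrow> real) \<Rightarrow> bool" where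
  "interval_rep N l r \<longleftrightarrow>
     (\<forall>i<N. l i < r i) \<and>
     (\<forall>i<N. \<forall>j<N. i \<noteq> j \<longrightarrow> l i \<noteq> l j \<and> r i \<noteq> r j) \<and>
     (\<forall>i<N. \<forall>j<N. l i \<noteq> r j) \<and>
     (\<forall>i<N. \<forall>j<N. i < j \<longrightarrow> l i < l j)"

definition interval_adj :: "(nat \<Rightarrow> real) \<Rightarrow> (nat \<Rightarrow> real) \<Rightarrow> nat \<Rightarrow> nat \<Rightarrow> bool" where
  "interval_adj l r i j \<longleftrightarrow> i \<noteq> j \<and> {l i..r i} \<inter> {l j..r j} \<noteq> {}"

text \<open>n = ceiling(log2 N) bits. Variable k < n is x_k, variable n + k is y_k.\<close>
definition nbits :: "nat \<Rightarrow> nat" where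
  "nbits N = nat \<lceil>log 2 (real N)\<rceil>"

definition bin_val :: "nat \<Rightarrow> (nat \<Rightarrow> bool) \<Rightarrow> nat" where
  "bin_val n x = (\<Sum>i<n. if x i then 2 ^ i else 0)"

definition chi_E :: "nat \<Rightarrow> (nat \<Rightarrow> real) \<Rightarrow> (nat \<Rightarrow> real) \<Rightarrow> (nat \<Rightarrow> bool) \<Rightarrow> bool" where
  "chi_E N l r a \<longleftrightarrow>
     (let n = nbits N; xv = bin_val n a; yv = bin_val n (\<lambda>i. a (n + i))
      in xv < N \<and> yv < N \<and> interval_adj l r xv yv)"

text \<open>2-interleaved order with decreasing significance:
x_{n-1}, y_{n-1}, x_{n-2}, y_{n-2}, ..., x_0, y_0.\<close>
definition interleaved_order :: "nat \<Rightarrow> nat list" where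
  "interleaved_order n = concat (map (\<lambda>k. [k, n + k]) (rev [0..<n]))"

end

theory Submission
  imports Defs "HOL-Library.Nat_Bijection"
begin

text \<open>A minimal OBDD has at most as many nodes as there are subfunctions obtained by fixing
  prefixes of the variable order. After the j most significant bits of x and y have been read in
  the interleaved order, the subfunction only depends on which block of size B = 2^(n-j) of the
  adjacency matrix has been selected. Ordering vertices by left endpoints gives the umbrella
  property (x < y < z and xz an edge imply xy an edge), so within a block row at most B blocks
  right of the diagonal contain a row that switches from adjacent to non-adjacent, and the
  remaining blocks are determined by nested row sets; hence a block row has at most 2B+1
  distinct blocks, and a level carries O(2^j B) = O(N) subfunctions. Summing over the 2n+1 levels
  gives O(N log N).\<close>

section \<open>Subfunctions and the quasi-reduced OBDD\<close>

definition assign_prefix :: "nat list \<Rightarrow> nat \<Rightarrow> nat set \<Rightarrow> (nat \<Rightarrow> bool) \<Rightarrow> nat \<Rightarrow> bool" where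
  "assign_prefix vo k S a = (\<lambda>v. if v \<in> set (take k vo) then v \<in> S else a v)"

definition subfun :: "nat list \<Rightarrow> ((nat \<Rightarrow> bool) \<Rightarrow> bool) \<Rightarrow> nat \<Rightarrow> nat set \<Rightarrow> (nat \<Rightarrow> bool) \<Rightarrow> bool" where
  "subfun vo f k S = (\<lambda>a. f (assign_prefix vo k S a))"

definition subfuns :: "nat list \<Rightarrow> ((nat \<Rightarrow> bool) \<Rightarrow> bool) \<Rightarrow> nat \<Rightarrow> ((nat \<Rightarrow> bool) \<Rightarrow> bool) set" where
  "subfuns vo f k = subfun vo f k ` Pow (set (take k vo))"

definition depends_only_on :: "nat set \<Rightarrow> ((nat \<Rightarrow> bool) \<Rightarrow> bool) \<Rightarrow> bool" where
  "depends_only_on V f \<longleftrightarrow> (\<forall>a b. (\<forall>v\<in>V. a v = b v) \<longrightarrow> f a = f b)"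

lemma finite_subfuns: "finite (subfuns vo f k)"
  unfolding subfuns_def by simp

lemma subfun_0: "subfun vo f 0 S = f"
  by (simp add: subfun_def assign_prefix_def)

lemma set_take_Suc_nth:
  "k < length vo \<Longrightarrow> set (take (Suc k) vo) = insert (vo ! k) (set (take k vo))"
  by (simp add: take_Suc_conv_app_nth)

lemma nth_notin_set_take:
  assumes "distinct vo" "k < length vo"
  shows "vo ! k \<notin> set (take k vo)"
  using assms by (metis distinct_take id_take_nth_drop not_distinct_conv_prefix)

lemma assign_prefix_Suc:
  assumes "distinct vo" "k < length vo" "T \<subseteq> set (take k vo)"
  shows "assign_prefix vo (Suc k) (if a (vo ! k) then insert (vo ! k) T else T) a = assign_prefix vo k T a"
  using nth_notin_set_take[OF assms(1,2)] assms(3) set_take_Suc_nth[OF assms(2)]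
  by (auto simp: assign_prefix_def fun_eq_iff)

lemma assign_prefix_Suc_update:
  assumes "distinct vo" "k < length vo"
  shows "assign_prefix vo (Suc k) S a = assign_prefix vo k (S - {vo ! k}) (a(vo ! k := vo ! k \<in> S))"
  using nth_notin_set_take[OF assms] set_take_Suc_nth[OF assms(2)]
  by (auto simp: assign_prefix_def fun_eq_iff)

lemma subfun_Suc_mem_subfuns:
  assumes "k < length vo" "T \<subseteq> set (take k vo)"
  shows "subfun vo f (Suc k) T \<in> subfuns vo f (Suc k)"
    and "subfun vo f (Suc k) (insert (vo ! k) T) \<in> subfuns vo f (Suc k)"
  using assms set_take_Suc_nth[OF assms(1)] by (auto simp: subfuns_def)

lemma card_subfuns_Suc_le:
  assumes "distinct vo" "k < length vo"
  shows "card (subfuns vo f (Suc k)) \<le> 2 * card (subfuns vo f k)"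
proof -
  let ?extend = "\<lambda>(g :: (nat \<Rightarrow> bool) \<Rightarrow> bool, b). \<lambda>a. g (a(vo ! k := b))"
  have "subfuns vo f (Suc k) \<subseteq> ?extend ` (subfuns vo f k \<times> UNIV)"
  proof
    fix h assume "h \<in> subfuns vo f (Suc k)"
    then obtain S where S: "S \<subseteq> set (take (Suc k) vo)" "h = subfun vo f (Suc k) S"
      by (auto simp: subfuns_def)
    have "S - {vo ! k} \<subseteq> set (take k vo)"
      using S(1) set_take_Suc_nth[OF assms(2)] by auto
    moreover have "h = ?extend (subfun vo f k (S - {vo ! k}), vo ! k \<in> S)"
      using S(2) assign_prefix_Suc_update[OF assms] by (simp add: subfun_def)
    ultimately show "h \<in> ?extend ` (subfuns vo f k \<times> UNIV)"
      by (auto simp: subfuns_def)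
  qed
  then have "card (subfuns vo f (Suc k)) \<le> card (?extend ` (subfuns vo f k \<times> UNIV))"
    by (intro card_mono) (simp_all add: finite_subfuns)
  also have "\<dots> \<le> card (subfuns vo f k \<times> (UNIV :: bool set))"
    by (rule card_image_le) (simp add: finite_subfuns)
  also have "\<dots> = 2 * card (subfuns vo f k)"
    by (simp add: card_cartesian_product)
  finally show ?thesis .
qed

definition subfun_rep :: "nat list \<Rightarrow> ((nat \<Rightarrow> bool) \<Rightarrow> bool) \<Rightarrow> nat \<Rightarrow> ((nat \<Rightarrow> bool) \<Rightarrow> bool) \<Rightarrow> nat set" where
  "subfun_rep vo f k g = (SOME S. S \<subseteq> set (take k vo) \<and> subfun vo f k S = g)"

definition subfun_node :: "nat list \<Rightarrow> ((nat \<Rightarrow> bool) \<Rightarrow> bool) \<Rightarrow> nat \<Rightarrow> ((nat \<Rightarrow> bool) \<Rightarrow> bool) \<Rightarrow> nat" where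
  "subfun_node vo f k g = prod_encode (k, set_encode (subfun_rep vo f k g))"

definition node_level :: "nat \<Rightarrow> nat" where
  "node_level u = fst (prod_decode u)"

definition node_fixed :: "nat \<Rightarrow> nat set" where
  "node_fixed u = set_decode (snd (prod_decode u))"

text \<open>A node on level k is the code of k together with a canonical set of variables, among the
  first k of vo, whose fixing to 1 (the others of the prefix to 0) yields its subfunction.\<close>

definition subfun_obdd :: "nat list \<Rightarrow> ((nat \<Rightarrow> bool) \<Rightarrow> bool) \<Rightarrow> obdd" where
  "subfun_obdd vo f =
    \<lparr> obdd_nodes = (\<Union>k\<le>length vo. subfun_node vo f k ` subfuns vo f k),
      obdd_root = subfun_node vo f 0 f,
      obdd_var = (\<lambda>u. if node_level u < length vo then Some (vo ! node_level u) else None),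
      obdd_lo = (\<lambda>u. let k = Suc (node_level u) in subfun_node vo f k (subfun vo f k (node_fixed u))),
      obdd_hi = (\<lambda>u. let k = Suc (node_level u)
                     in subfun_node vo f k (subfun vo f k (insert (vo ! node_level u) (node_fixed u)))),
      obdd_sink = (\<lambda>u. subfun vo f (length vo) (node_fixed u) (\<lambda>_. False)) \<rparr>"

lemma subfun_rep:
  assumes "g \<in> subfuns vo f k"
  shows "subfun_rep vo f k g \<subseteq> set (take k vo)" "subfun vo f k (subfun_rep vo f k g) = g"
proof -
  from assms obtain S where "S \<subseteq> set (take k vo)" "subfun vo f k S = g"
    by (auto simp: subfuns_def)
  then have "subfun_rep vo f k g \<subseteq> set (take k vo) \<and> subfun vo f k (subfun_rep vo f k g) = g"
    unfolding subfun_rep_def by (rule someI[of _ S, OF conjI])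
  then show "subfun_rep vo f k g \<subseteq> set (take k vo)" "subfun vo f k (subfun_rep vo f k g) = g"
    by auto
qed

lemma subfun_node_decode:
  assumes "g \<in> subfuns vo f k"
  shows "node_level (subfun_node vo f k g) = k"
    and "node_fixed (subfun_node vo f k g) = subfun_rep vo f k g"
  using finite_subset[OF subfun_rep(1)[OF assms]]
  by (simp_all add: node_level_def node_fixed_def subfun_node_def)

lemma subfun_obdd_var:
  assumes "g \<in> subfuns vo f k"
  shows "obdd_var (subfun_obdd vo f) (subfun_node vo f k g) = (if k < length vo then Some (vo ! k) else None)"
  using subfun_node_decode[OF assms] by (simp add: subfun_obdd_def)

lemma subfun_obdd_lo_hi:
  assumes "g \<in> subfuns vo f k"
  defines "T \<equiv> subfun_rep vo f k g"
  shows "obdd_lo (subfun_obdd vo f) (subfun_node vo f k g) = subfun_node vo f (Suc k) (subfun vo f (Suc k) T)"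
    and "obdd_hi (subfun_obdd vo f) (subfun_node vo f k g)
           = subfun_node vo f (Suc k) (subfun vo f (Suc k) (insert (vo ! k) T))"
  using subfun_node_decode[OF assms(1)] by (simp_all add: subfun_obdd_def T_def)

lemma subfuns_length_const:
  assumes "depends_only_on (set vo) f" "g \<in> subfuns vo f (length vo)"
  shows "g a = g b"
proof -
  obtain S where "g = subfun vo f (length vo) S"
    using assms(2) by (auto simp: subfuns_def)
  moreover have "\<forall>v\<in>set vo. assign_prefix vo (length vo) S a v = assign_prefix vo (length vo) S b v"
    by (simp add: assign_prefix_def)
  ultimately show ?thesis
    using assms(1) unfolding depends_only_on_def subfun_def by blast
qed

lemma subfun_obdd_sink:
  assumes "depends_only_on (set vo) f" "g \<in> subfuns vo f (length vo)"
  shows "obdd_sink (subfun_obdd vo f) (subfun_node vo f (length vo) g) = g a"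
  using subfun_node_decode(2)[OF assms(2)] subfun_rep(2)[OF assms(2)] subfuns_length_const[OF assms]
  by (simp add: subfun_obdd_def)

lemma subfun_obdd_reach:
  assumes "distinct vo" "depends_only_on (set vo) f" "k \<le> length vo"
  shows "g \<in> subfuns vo f k \<Longrightarrow> obdd_reach (subfun_obdd vo f) a (subfun_node vo f k g) (g a)"
  using assms(3)
proof (induction k arbitrary: g rule: inc_induct)
  case base
  have "obdd_reach (subfun_obdd vo f) a (subfun_node vo f (length vo) g)
      (obdd_sink (subfun_obdd vo f) (subfun_node vo f (length vo) g))"
    by (rule obdd_reach.sink) (simp add: subfun_obdd_var[OF base])
  with subfun_obdd_sink[OF assms(2) base, of a] show ?case
    by simp
next
  case (step k)
  let ?B = "subfun_obdd vo f" and ?u = "subfun_node vo f k g"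
  let ?T = "subfun_rep vo f k g"
  let ?T' = "if a (vo ! k) then insert (vo ! k) ?T else ?T"
  have T: "?T \<subseteq> set (take k vo)" "subfun vo f k ?T = g"
    using subfun_rep[OF step.prems] by auto
  have var: "obdd_var ?B ?u = Some (vo ! k)"
    using subfun_obdd_var[OF step.prems] step.hyps(2) by simp
  have succ: "(if a (vo ! k) then obdd_hi ?B ?u else obdd_lo ?B ?u)
      = subfun_node vo f (Suc k) (subfun vo f (Suc k) ?T')"
    by (simp add: subfun_obdd_lo_hi[OF step.prems])
  have "subfun vo f (Suc k) ?T' \<in> subfuns vo f (Suc k)"
    using subfun_Suc_mem_subfuns[OF step.hyps(2) T(1)] by simp
  then have reach: "obdd_reach ?B a (subfun_node vo f (Suc k) (subfun vo f (Suc k) ?T'))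
      (subfun vo f (Suc k) ?T' a)"
    by (rule step.IH)
  have "subfun vo f (Suc k) ?T' a = subfun vo f k ?T a"
    using assign_prefix_Suc[OF assms(1) step.hyps(2) T(1), of a] by (simp add: subfun_def)
  with T(2) have same_value: "subfun vo f (Suc k) ?T' a = g a"
    by simp
  show ?case
    by (rule obdd_reach.inner[OF var]) (simp only: succ reach flip: same_value)
qed

lemma subfun_obdd_represents:
  assumes "distinct vo" "depends_only_on (set vo) f"
  shows "obdd_represents (subfun_obdd vo f) f"
  using subfun_obdd_reach[OF assms, of 0 f] subfun_0[of vo f]
  by (auto simp: obdd_represents_def subfun_obdd_def subfuns_def)

lemma subfun_obdd_sinks_unique:
  assumes "depends_only_on (set vo) f"
    and "u \<in> obdd_nodes (subfun_obdd vo f)" "w \<in> obdd_nodes (subfun_obdd vo f)"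
    and "obdd_var (subfun_obdd vo f) u = None" "obdd_var (subfun_obdd vo f) w = None"
    and "obdd_sink (subfun_obdd vo f) u = obdd_sink (subfun_obdd vo f) w"
  shows "u = w"
proof -
  obtain k g where g: "k \<le> length vo" "g \<in> subfuns vo f k" "u = subfun_node vo f k g"
    using assms(2) by (auto simp: subfun_obdd_def)
  obtain k' g' where g': "k' \<le> length vo" "g' \<in> subfuns vo f k'" "w = subfun_node vo f k' g'"
    using assms(3) by (auto simp: subfun_obdd_def)
  have "k = length vo" "k' = length vo"
    using assms(4,5) g g' subfun_obdd_var[OF g(2)] subfun_obdd_var[OF g'(2)] by (auto split: if_splits)
  with g g' have "g a = g' a" for a
    using assms(6) subfun_obdd_sink[OF assms(1)] by metis
  then have "g = g'" ..
  with g g' \<open>k = length vo\<close> \<open>k' = length vo\<close> show "u = w"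
    by simp
qed

lemma subfun_obdd_inner:
  assumes "u \<in> obdd_nodes (subfun_obdd vo f)" "obdd_var (subfun_obdd vo f) u = Some v"
  obtains k where "k < length vo" "v = vo ! k"
    and "obdd_lo (subfun_obdd vo f) u \<in> obdd_nodes (subfun_obdd vo f)"
    and "obdd_hi (subfun_obdd vo f) u \<in> obdd_nodes (subfun_obdd vo f)"
    and "\<And>w. w \<in> {obdd_lo (subfun_obdd vo f) u, obdd_hi (subfun_obdd vo f) u} \<Longrightarrow>
           obdd_var (subfun_obdd vo f) w \<noteq> None \<Longrightarrow>
           Suc k < length vo \<and> obdd_var (subfun_obdd vo f) w = Some (vo ! Suc k)"
proof -
  obtain k g where g: "k \<le> length vo" "g \<in> subfuns vo f k" "u = subfun_node vo f k g"
    using assms(1) by (auto simp: subfun_obdd_def)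
  have k: "k < length vo" "v = vo ! k"
    using assms(2) g subfun_obdd_var[OF g(2)] by (auto split: if_splits)
  let ?T = "subfun_rep vo f k g"
  have lo: "subfun vo f (Suc k) ?T \<in> subfuns vo f (Suc k)"
    and hi: "subfun vo f (Suc k) (insert (vo ! k) ?T) \<in> subfuns vo f (Suc k)"
    using subfun_Suc_mem_subfuns[OF k(1) subfun_rep(1)[OF g(2)]] by auto
  show thesis
  proof (rule that[OF k])
    show "obdd_lo (subfun_obdd vo f) u \<in> obdd_nodes (subfun_obdd vo f)"
      "obdd_hi (subfun_obdd vo f) u \<in> obdd_nodes (subfun_obdd vo f)"
      using g(3) subfun_obdd_lo_hi[OF g(2)] lo hi k(1) by (auto simp: subfun_obdd_def)
    show "Suc k < length vo \<and> obdd_var (subfun_obdd vo f) w = Some (vo ! Suc k)"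
      if "w \<in> {obdd_lo (subfun_obdd vo f) u, obdd_hi (subfun_obdd vo f) u}"
        and "obdd_var (subfun_obdd vo f) w \<noteq> None" for w
      using that g(3) subfun_obdd_lo_hi[OF g(2)] subfun_obdd_var[OF lo] subfun_obdd_var[OF hi]
      by (auto split: if_splits)
  qed
qed

lemma is_pi_obdd_subfun_obdd:
  assumes "distinct vo" "depends_only_on (set vo) f"
  shows "is_pi_obdd vo (subfun_obdd vo f)"
  unfolding is_pi_obdd_def
proof (intro conjI ballI allI impI)
  show "finite (obdd_nodes (subfun_obdd vo f))"
    by (simp add: subfun_obdd_def finite_subfuns)
  show "obdd_root (subfun_obdd vo f) \<in> obdd_nodes (subfun_obdd vo f)"
    using subfun_0[of vo f] by (force simp: subfun_obdd_def subfuns_def)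
  fix u v
  assume u: "u \<in> obdd_nodes (subfun_obdd vo f)" and v: "obdd_var (subfun_obdd vo f) u = Some v"
  obtain k where "k < length vo" "v = vo ! k"
    and "obdd_lo (subfun_obdd vo f) u \<in> obdd_nodes (subfun_obdd vo f)"
    and "obdd_hi (subfun_obdd vo f) u \<in> obdd_nodes (subfun_obdd vo f)"
    and succ: "\<And>w. w \<in> {obdd_lo (subfun_obdd vo f) u, obdd_hi (subfun_obdd vo f) u} \<Longrightarrow>
           obdd_var (subfun_obdd vo f) w \<noteq> None \<Longrightarrow>
           Suc k < length vo \<and> obdd_var (subfun_obdd vo f) w = Some (vo ! Suc k)"
    using subfun_obdd_inner[OF u v] by blast
  then show "v \<in> set vo" "obdd_lo (subfun_obdd vo f) u \<in> obdd_nodes (subfun_obdd vo f)"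
    "obdd_hi (subfun_obdd vo f) u \<in> obdd_nodes (subfun_obdd vo f)"
    by auto
  fix w v' assume "w \<in> {obdd_lo (subfun_obdd vo f) u, obdd_hi (subfun_obdd vo f) u}"
    and "obdd_var (subfun_obdd vo f) w = Some v'"
  with succ \<open>v = vo ! k\<close> show "\<exists>i j. i < j \<and> j < length vo \<and> vo ! i = v \<and> vo ! j = v'"
    by fastforce
qed (use assms subfun_obdd_sinks_unique in blast)+

lemma obdd_size_subfun_obdd:
  "obdd_size (subfun_obdd vo f) \<le> (\<Sum>k\<le>length vo. card (subfuns vo f k))"
proof -
  have "obdd_size (subfun_obdd vo f) \<le> (\<Sum>k\<le>length vo. card (subfun_node vo f k ` subfuns vo f k))"
    unfolding obdd_size_def by (simp add: subfun_obdd_def card_UN_le)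
  also have "\<dots> \<le> (\<Sum>k\<le>length vo. card (subfuns vo f k))"
    by (intro sum_mono card_image_le finite_subfuns)
  finally show ?thesis .
qed

lemma min_obdd_size_le_card_subfuns:
  assumes "distinct vo" "depends_only_on (set vo) f"
  shows "min_obdd_size vo f \<le> (\<Sum>k\<le>length vo. card (subfuns vo f k))"
proof -
  have "min_obdd_size vo f \<le> obdd_size (subfun_obdd vo f)"
    unfolding min_obdd_size_def
    using is_pi_obdd_subfun_obdd[OF assms] subfun_obdd_represents[OF assms] by (blast intro: Least_le)
  then show ?thesis
    using obdd_size_subfun_obdd[of vo f] by (rule order_trans)
qed

section \<open>Block structure of adjacency under the umbrella property\<close>

lemma card_chain_le:
  assumes "finite \<T>" "\<And>T. T \<in> \<T> \<Longrightarrow> T \<subseteq> {..<B}"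
    and "\<And>T T'. T \<in> \<T> \<Longrightarrow> T' \<in> \<T> \<Longrightarrow> T \<subseteq> T' \<or> T' \<subseteq> T"
  shows "card \<T> \<le> Suc B"
proof -
  have "inj_on card \<T>"
  proof (rule inj_onI)
    fix T T' assume T: "T \<in> \<T>" "T' \<in> \<T>" "card T = card T'"
    then have "finite T" "finite T'"
      using assms(2) finite_subset by blast+
    with T assms(3)[OF T(1,2)] show "T = T'"
      by (metis card_subset_eq)
  qed
  moreover have "card ` \<T> \<subseteq> {..B}"
    using assms(2) by (fastforce dest: card_mono[rotated])
  ultimately have "card \<T> \<le> card {..B}"
    by (intro card_inj_on_le) auto
  then show ?thesis
    by simp
qed

definition block :: "(nat \<Rightarrow> nat \<Rightarrow> bool) \<Rightarrow> nat \<Rightarrow> nat \<Rightarrow> nat \<Rightarrow> nat \<Rightarrow> nat \<Rightarrow> bool" where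
  "block F B p q = (\<lambda>u v. u < B \<and> v < B \<and> F (p * B + u) (q * B + v))"

lemma mult_add_less_mult:
  assumes "p < q" "u < (B::nat)"
  shows "p * B + u < q * B"
proof -
  have "p * B + u < Suc p * B"
    using assms(2) by simp
  also have "\<dots> \<le> q * B"
    using assms(1) by (intro mult_le_mono1) simp
  finally show ?thesis .
qed

locale umbrella_ordering =
  fixes F :: "nat \<Rightarrow> nat \<Rightarrow> bool"
  assumes adj_sym: "F x y = F y x"
    and adj_between: "x < y \<Longrightarrow> y \<le> z \<Longrightarrow> F x z \<Longrightarrow> F x y"
begin

lemma block_transpose: "block F B q p = (\<lambda>u v. block F B p q v u)"
  unfolding block_def using adj_sym by (auto simp: fun_eq_iff)

text \<open>By the umbrella property a row splits in at most one block right of the diagonal, and a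
  block in which no row splits is constant along its rows.\<close>

definition row_splits :: "nat \<Rightarrow> nat \<Rightarrow> nat \<Rightarrow> nat \<Rightarrow> bool" where
  "row_splits B p q u \<longleftrightarrow> u < B \<and> F (p * B + u) (q * B) \<and> \<not> F (p * B + u) (q * B + B - 1)"

lemma row_splits_unique:
  assumes "p < q" "p < q'" "row_splits B p q u" "row_splits B p q' u"
  shows "q = q'"
proof (rule ccontr)
  have no_split_before: False if "p < q1" "q1 < q2" "row_splits B p q1 u" "row_splits B p q2 u" for q1 q2
  proof -
    from that(3) have "u < B"
      by (simp add: row_splits_def)
    then have "p * B + u < q1 * B + B - 1"
      using mult_add_less_mult[OF \<open>p < q1\<close>, of u B] by linarith
    moreover have "q1 * B + B - 1 \<le> q2 * B"
      using mult_le_mono1[of "Suc q1" q2 B] \<open>q1 < q2\<close> by simp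
    ultimately show False
      using adj_between that(3,4) unfolding row_splits_def by blast
  qed
  assume "q \<noteq> q'"
  then show False
    using no_split_before assms by (metis linorder_neqE_nat)
qed

lemma card_split_blocks_le:
  "card {q. p < q \<and> q < M \<and> (\<exists>u. row_splits B p q u)} \<le> B"
proof -
  have "{q. p < q \<and> q < M \<and> (\<exists>u. row_splits B p q u)}
      = (\<Union>u<B. {q. p < q \<and> q < M \<and> row_splits B p q u})"
    by (auto simp: row_splits_def)
  also have "card \<dots> \<le> (\<Sum>u<B. card {q. p < q \<and> q < M \<and> row_splits B p q u})"
    by (rule card_UN_le) simp
  also have "\<dots> \<le> (\<Sum>u<B. 1)"
    using row_splits_unique by (intro sum_mono) (auto simp: card_le_Suc0_iff_eq)
  finally show ?thesis
    by simp
qed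

definition block_rows :: "nat \<Rightarrow> nat \<Rightarrow> nat \<Rightarrow> nat set" where
  "block_rows B p q = {u. u < B \<and> F (p * B + u) (q * B)}"

lemma block_eq_block_rows:
  assumes "0 < B" "p < q" "\<not> (\<exists>u. row_splits B p q u)"
  shows "block F B p q = (\<lambda>u v. u < B \<and> v < B \<and> u \<in> block_rows B p q)"
proof -
  have "F (p * B + u) (q * B + v) = F (p * B + u) (q * B)" if "u < B" "v < B" for u v
  proof
    show "F (p * B + u) (q * B + v) \<Longrightarrow> F (p * B + u) (q * B)"
      by (rule adj_between[OF mult_add_less_mult[OF assms(2) that(1)] le_add1])
  next
    assume "F (p * B + u) (q * B)"
    then have "F (p * B + u) (q * B + B - 1)"
      using assms(3) that(1) unfolding row_splits_def by blast
    moreover have "p * B + u < q * B + v" "q * B + v \<le> q * B + B - 1"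
      using mult_add_less_mult[OF assms(2) that(1)] that(2) by linarith+
    ultimately show "F (p * B + u) (q * B + v)"
      using adj_between by blast
  qed
  then show ?thesis
    unfolding block_def block_rows_def by (auto simp: fun_eq_iff)
qed

lemma block_rows_antimono: "p < q \<Longrightarrow> q \<le> q' \<Longrightarrow> block_rows B p q' \<subseteq> block_rows B p q"
  unfolding block_rows_def using adj_between mult_add_less_mult by (blast intro: mult_le_mono1)

lemma card_blocks_right_of_diagonal:
  assumes "0 < B"
  shows "card (block F B p ` {q. p < q \<and> q < M}) \<le> 2 * B + 1"
proof -
  define Q1 where "Q1 = {q. p < q \<and> q < M \<and> (\<exists>u. row_splits B p q u)}"
  define Q2 where "Q2 = {q. p < q \<and> q < M \<and> \<not> (\<exists>u. row_splits B p q u)}"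
  have "card (block F B p ` Q2) \<le> card ((\<lambda>T u v. u < B \<and> v < B \<and> u \<in> T) ` block_rows B p ` Q2)"
    using block_eq_block_rows[OF assms] unfolding Q2_def
    by (intro card_mono finite_imageI) (auto simp: image_image)
  also have "\<dots> \<le> card (block_rows B p ` Q2)"
    by (rule card_image_le) (simp add: Q2_def)
  also have "\<dots> \<le> Suc B"
  proof (rule card_chain_le)
    fix T T' assume "T \<in> block_rows B p ` Q2" "T' \<in> block_rows B p ` Q2"
    then obtain q q' where "p < q" "p < q'" "T = block_rows B p q" "T' = block_rows B p q'"
      by (auto simp: Q2_def)
    then show "T \<subseteq> T' \<or> T' \<subseteq> T"
      using block_rows_antimono nat_le_linear[of q q'] by blast
  qed (auto simp: Q2_def block_rows_def)
  finally have "card (block F B p ` Q2) \<le> Suc B" .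
  moreover have "card (block F B p ` Q1) \<le> B"
    using card_split_blocks_le[of p M B] card_image_le[of Q1 "block F B p"] unfolding Q1_def by simp
  moreover have "{q. p < q \<and> q < M} = Q1 \<union> Q2"
    unfolding Q1_def Q2_def by blast
  ultimately show ?thesis
    using card_Un_le[of "block F B p ` Q1" "block F B p ` Q2"] by (simp add: image_Un)
qed

lemma card_blocks:
  assumes "0 < B"
  shows "card {block F B p q | p q. p < M \<and> q < M} \<le> M * (4 * B + 3)"
proof -
  let ?U = "\<Union>p<M. block F B p ` {q. p < q \<and> q < M}"
  let ?transpose = "\<lambda>g :: nat \<Rightarrow> nat \<Rightarrow> bool. \<lambda>u v. g v u"
  have "{block F B p q | p q. p < M \<and> q < M} \<subseteq> (\<lambda>p. block F B p p) ` {..<M} \<union> ?U \<union> ?transpose ` ?U"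
  proof
    fix g assume "g \<in> {block F B p q | p q. p < M \<and> q < M}"
    then obtain p q where g: "g = block F B p q" "p < M" "q < M"
      by auto
    consider "p = q" | "p < q" | "q < p"
      by linarith
    then show "g \<in> (\<lambda>p. block F B p p) ` {..<M} \<union> ?U \<union> ?transpose ` ?U"
    proof cases
      case 3
      then have "block F B q p \<in> ?U" and "g = ?transpose (block F B q p)"
        using g block_transpose[of B p q] by auto
      then show ?thesis
        by blast
    qed (use g in auto)
  qed
  then have "card {block F B p q | p q. p < M \<and> q < M}
      \<le> card ((\<lambda>p. block F B p p) ` {..<M} \<union> ?U \<union> ?transpose ` ?U)"
    by (intro card_mono) auto
  also have "\<dots> \<le> M + card ?U + card ?U"
    using card_Un_le[of "(\<lambda>p. block F B p p) ` {..<M} \<union> ?U" "?transpose ` ?U"]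
      card_Un_le[of "(\<lambda>p. block F B p p) ` {..<M}" ?U]
      card_image_le[of "{..<M}" "\<lambda>p. block F B p p"] card_image_le[of ?U ?transpose]
    by simp
  also have "card ?U \<le> M * (2 * B + 1)"
    using card_UN_le[of "{..<M}" "\<lambda>p. block F B p ` {q. p < q \<and> q < M}"]
      sum_mono[of "{..<M}" "\<lambda>p. card (block F B p ` {q. p < q \<and> q < M})" "\<lambda>_. 2 * B + 1"]
      card_blocks_right_of_diagonal[OF assms]
    by simp
  finally show ?thesis
    by (simp add: algebra_simps)
qed

end

section \<open>Interval graphs in the interleaved variable order\<close>

definition interval_edge :: "nat \<Rightarrow> (nat \<Rightarrow> real) \<Rightarrow> (nat \<Rightarrow> real) \<Rightarrow> nat \<Rightarrow> nat \<Rightarrow> bool" where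
  "interval_edge N l r x y \<longleftrightarrow> x < N \<and> y < N \<and> interval_adj l r x y"

lemma umbrella_ordering_interval_edge:
  assumes "interval_rep N l r"
  shows "umbrella_ordering (interval_edge N l r)"
proof
  show "interval_edge N l r x y = interval_edge N l r y x" for x y
    unfolding interval_edge_def interval_adj_def by (auto simp: Int_commute)
next
  fix x y z assume xy: "x < y" and yz: "y \<le> z" and xz: "interval_edge N l r x z"
  then have "x < N" "y < N" "z < N" "l z \<le> r x"
    by (auto simp: interval_edge_def interval_adj_def)
  moreover have "l x < l y" "l y < r y"
    using assms xy \<open>x < N\<close> \<open>y < N\<close> by (auto simp: interval_rep_def)
  moreover have "l y \<le> l z"
    using assms yz \<open>z < N\<close> unfolding interval_rep_def by (cases "y = z") (auto intro: less_imp_le)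
  ultimately have "l y \<in> {l x..r x} \<inter> {l y..r y}"
    by auto
  with \<open>x < N\<close> \<open>y < N\<close> xy show "interval_edge N l r x y"
    by (auto simp: interval_edge_def interval_adj_def)
qed

lemma bin_val_less: "bin_val k a < 2 ^ k"
  by (induction k) (auto simp: bin_val_def)

lemma bin_val_cong: "(\<And>i. i < k \<Longrightarrow> a i = b i) \<Longrightarrow> bin_val k a = bin_val k b"
  unfolding bin_val_def by (rule sum.cong) auto

lemma bin_val_split:
  assumes "m \<le> n"
  shows "bin_val n a = bin_val m a + 2 ^ m * bin_val (n - m) (\<lambda>i. a (m + i))"
proof -
  have "bin_val n a = bin_val m a + (\<Sum>i\<in>{m..<n}. if a i then 2 ^ i else 0)"
    using sum.atLeastLessThan_concat[of 0 m n, symmetric] assms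
    unfolding bin_val_def atLeast0LessThan by blast
  also have "(\<Sum>i\<in>{m..<n}. if a i then 2 ^ i else 0) = (\<Sum>i<n - m. if a (m + i) then 2 ^ (m + i) else (0::nat))"
    using assms by (simp add: sum.atLeastLessThan_shift_0[of _ m n] atLeast0LessThan)
  also have "\<dots> = 2 ^ m * bin_val (n - m) (\<lambda>i. a (m + i))"
    unfolding bin_val_def sum_distrib_left by (intro sum.cong) (simp_all add: power_add)
  finally show ?thesis .
qed

lemma chi_E_eq_interval_edge:
  "chi_E N l r a = interval_edge N l r (bin_val (nbits N) a) (bin_val (nbits N) (\<lambda>i. a (nbits N + i)))"
  unfolding chi_E_def interval_edge_def Let_def by simp

lemma length_interleaved_order: "length (interleaved_order n) = 2 * n"
proof -
  have "length (concat (map (\<lambda>k. [k, n + k]) xs)) = 2 * length xs" for xs :: "nat list"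
    by (induction xs) auto
  then show ?thesis
    unfolding interleaved_order_def by simp
qed

lemma distinct_interleaved_order: "distinct (interleaved_order n)"
proof -
  have "distinct xs \<Longrightarrow> \<forall>k\<in>set xs. k < n \<Longrightarrow> distinct (concat (map (\<lambda>k. [k, n + k]) xs))" for xs
    by (induction xs) force+
  then show ?thesis
    unfolding interleaved_order_def by simp
qed

lemma set_take_interleaved_order:
  assumes "j \<le> n"
  shows "set (take (2 * j) (interleaved_order n)) = {n - j..<n} \<union> {n + (n - j)..<n + n}"
proof -
  have take_pairs: "take (2 * j) (concat (map (\<lambda>k. [k, n + k]) xs)) = concat (map (\<lambda>k. [k, n + k]) (take j xs))"
    for xs :: "nat list"
  proof (induction xs arbitrary: j)
    case (Cons x xs)
    then show ?case
      by (cases j) (simp_all add: numeral_2_eq_2)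
  qed simp
  have "take j (rev [0..<n]) = rev [n - j..<n]"
    by (simp add: take_rev)
  then have "set (take (2 * j) (interleaved_order n)) = (\<Union>k\<in>{n - j..<n}. {k, n + k})"
    unfolding interleaved_order_def take_pairs by auto
  also have "\<dots> = {n - j..<n} \<union> {n + (n - j)..<n + n}"
  proof (rule set_eqI, rule iffI)
    fix x assume "x \<in> {n - j..<n} \<union> {n + (n - j)..<n + n}"
    then show "x \<in> (\<Union>k\<in>{n - j..<n}. {k, n + k})"
      by (cases "x < n") (auto intro!: bexI[of _ "x - n"])
  qed auto
  finally show ?thesis .
qed

lemma set_interleaved_order: "set (interleaved_order n) = {..<2 * n}"
proof -
  have "set (interleaved_order n) = {0..<n} \<union> {n..<n + n}"
    using set_take_interleaved_order[of n n] by (simp add: length_interleaved_order)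
  also have "\<dots> = {..<2 * n}"
    by (simp add: ivl_disj_un_one(2) atLeast0LessThan mult_2)
  finally show ?thesis .
qed

lemma chi_E_depends_only_on: "depends_only_on (set (interleaved_order (nbits N))) (chi_E N l r)"
  unfolding depends_only_on_def set_interleaved_order chi_E_eq_interval_edge
proof (intro allI impI)
  fix a b :: "nat \<Rightarrow> bool"
  assume agree: "\<forall>v\<in>{..<2 * nbits N}. a v = b v"
  have "bin_val (nbits N) a = bin_val (nbits N) b"
    using agree by (intro bin_val_cong) simp
  moreover have "bin_val (nbits N) (\<lambda>i. a (nbits N + i)) = bin_val (nbits N) (\<lambda>i. b (nbits N + i))"
    using agree by (intro bin_val_cong) simp
  ultimately show "interval_edge N l r (bin_val (nbits N) a) (bin_val (nbits N) (\<lambda>i. a (nbits N + i)))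
      = interval_edge N l r (bin_val (nbits N) b) (bin_val (nbits N) (\<lambda>i. b (nbits N + i)))"
    by (simp only:)
qed

lemma bin_val_assign_prefix_interleaved:
  fixes a :: "nat \<Rightarrow> bool"
  assumes "j \<le> n" "S \<subseteq> set (take (2 * j) (interleaved_order n))"
  defines "a' \<equiv> assign_prefix (interleaved_order n) (2 * j) S a"
  shows "bin_val n a' = bin_val (n - j) a + 2 ^ (n - j) * bin_val j (\<lambda>i. n - j + i \<in> S)"
    and "bin_val n (\<lambda>i. a' (n + i))
           = bin_val (n - j) (\<lambda>i. a (n + i)) + 2 ^ (n - j) * bin_val j (\<lambda>i. n + (n - j + i) \<in> S)"
proof -
  have fixed: "set (take (2 * j) (interleaved_order n)) = {n - j..<n} \<union> {n + (n - j)..<n + n}"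
    using set_take_interleaved_order[OF assms(1)] .
  have "bin_val (n - j) a' = bin_val (n - j) a"
    and "bin_val j (\<lambda>i. a' (n - j + i)) = bin_val j (\<lambda>i. n - j + i \<in> S)"
    and "bin_val (n - j) (\<lambda>i. a' (n + i)) = bin_val (n - j) (\<lambda>i. a (n + i))"
    and "bin_val j (\<lambda>i. a' (n + (n - j + i))) = bin_val j (\<lambda>i. n + (n - j + i) \<in> S)"
    using assms(1) by (auto intro!: bin_val_cong simp: a'_def assign_prefix_def fixed)
  then show "bin_val n a' = bin_val (n - j) a + 2 ^ (n - j) * bin_val j (\<lambda>i. n - j + i \<in> S)"
    and "bin_val n (\<lambda>i. a' (n + i))
           = bin_val (n - j) (\<lambda>i. a (n + i)) + 2 ^ (n - j) * bin_val j (\<lambda>i. n + (n - j + i) \<in> S)"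
    using bin_val_split[of "n - j" n a'] bin_val_split[of "n - j" n "\<lambda>i. a' (n + i)"] assms(1)
    by (simp_all add: add.assoc)
qed

lemma card_subfuns_chi_E_even_level:
  assumes "interval_rep N l r" "j \<le> nbits N"
  shows "card (subfuns (interleaved_order (nbits N)) (chi_E N l r) (2 * j)) \<le> 7 * 2 ^ nbits N"
proof -
  let ?n = "nbits N" and ?F = "interval_edge N l r"
  let ?B = "2 ^ (?n - j) :: nat" and ?M = "2 ^ j :: nat"
  let ?blocks = "{block ?F ?B p q | p q. p < ?M \<and> q < ?M}"
  let ?lift = "\<lambda>g :: nat \<Rightarrow> nat \<Rightarrow> bool. \<lambda>a. g (bin_val (?n - j) a) (bin_val (?n - j) (\<lambda>i. a (?n + i)))"
  have "subfuns (interleaved_order ?n) (chi_E N l r) (2 * j) \<subseteq> ?lift ` ?blocks"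
  proof
    fix g assume "g \<in> subfuns (interleaved_order ?n) (chi_E N l r) (2 * j)"
    then obtain S where S: "S \<subseteq> set (take (2 * j) (interleaved_order ?n))"
      and g: "g = subfun (interleaved_order ?n) (chi_E N l r) (2 * j) S"
      by (auto simp: subfuns_def)
    define p where "p = bin_val j (\<lambda>i. ?n - j + i \<in> S)"
    define q where "q = bin_val j (\<lambda>i. ?n + (?n - j + i) \<in> S)"
    have "g = ?lift (block ?F ?B p q)"
    proof
      fix a
      show "g a = ?lift (block ?F ?B p q) a"
        using bin_val_assign_prefix_interleaved[OF assms(2) S, of a]
          bin_val_less[of "?n - j" a] bin_val_less[of "?n - j" "\<lambda>i. a (?n + i)"]
        by (simp add: g subfun_def chi_E_eq_interval_edge block_def p_def q_def algebra_simps)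
    qed
    moreover have "p < ?M" "q < ?M"
      by (simp_all add: p_def q_def bin_val_less)
    ultimately show "g \<in> ?lift ` ?blocks"
      by blast
  qed
  moreover have finite_blocks: "finite ?blocks"
    by (rule finite_image_set2) simp_all
  ultimately have "card (subfuns (interleaved_order ?n) (chi_E N l r) (2 * j)) \<le> card (?lift ` ?blocks)"
    by (intro card_mono) simp_all
  also have "\<dots> \<le> card ?blocks"
    by (rule card_image_le[OF finite_blocks])
  also have "\<dots> \<le> ?M * (4 * ?B + 3)"
    by (rule umbrella_ordering.card_blocks[OF umbrella_ordering_interval_edge[OF assms(1)]]) simp
  also have "\<dots> \<le> 7 * 2 ^ ?n"
  proof -
    have "?M * ?B = 2 ^ ?n" "?M \<le> 2 ^ ?n"
      using assms(2) by (simp_all flip: power_add)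
    then show ?thesis
      by (simp add: algebra_simps)
  qed
  finally show ?thesis .
qed

lemma card_subfuns_chi_E:
  assumes "interval_rep N l r" "k \<le> 2 * nbits N"
  shows "card (subfuns (interleaved_order (nbits N)) (chi_E N l r) k) \<le> 14 * 2 ^ nbits N"
proof (cases "even k")
  case True
  then have "k = 2 * (k div 2)" "k div 2 \<le> nbits N"
    using assms(2) by simp_all
  then show ?thesis
    using card_subfuns_chi_E_even_level[OF assms(1), of "k div 2"] by simp
next
  case False
  define j where "j = k div 2"
  have k: "k = Suc (2 * j)" and "j \<le> nbits N"
    using False assms(2) by (simp_all add: j_def)
  then have "card (subfuns (interleaved_order (nbits N)) (chi_E N l r) k)
      \<le> 2 * card (subfuns (interleaved_order (nbits N)) (chi_E N l r) (2 * j))"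
    using assms(2) by (simp add: card_subfuns_Suc_le distinct_interleaved_order length_interleaved_order)
  also have "\<dots> \<le> 14 * 2 ^ nbits N"
    using card_subfuns_chi_E_even_level[OF assms(1) \<open>j \<le> nbits N\<close>] by simp
  finally show ?thesis .
qed

lemma min_obdd_size_chi_E_le:
  assumes "interval_rep N l r"
  shows "min_obdd_size (interleaved_order (nbits N)) (chi_E N l r) \<le> (2 * nbits N + 1) * (14 * 2 ^ nbits N)"
proof -
  have "min_obdd_size (interleaved_order (nbits N)) (chi_E N l r)
      \<le> (\<Sum>k\<le>2 * nbits N. card (subfuns (interleaved_order (nbits N)) (chi_E N l r) k))"
    using min_obdd_size_le_card_subfuns[OF distinct_interleaved_order chi_E_depends_only_on]
    by (simp add: length_interleaved_order)
  also have "\<dots> \<le> (\<Sum>k\<le>2 * nbits N. 14 * 2 ^ nbits N)"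
    by (intro sum_mono card_subfuns_chi_E[OF assms]) simp
  finally show ?thesis
    by simp
qed

lemma nbits_bounds:
  assumes "N \<ge> 2"
  shows "1 \<le> nbits N" "real (nbits N) \<le> 2 * log 2 N" "2 ^ nbits N \<le> 2 * real N"
proof -
  have log: "1 \<le> log 2 N"
    using assms by simp
  then have nbits: "real (nbits N) = \<lceil>log 2 N\<rceil>"
    by (simp add: nbits_def)
  then show "1 \<le> nbits N" "real (nbits N) \<le> 2 * log 2 N"
    using log by linarith+
  have "(2::real) ^ nbits N = 2 powr real (nbits N)"
    by (simp add: powr_realpow)
  also have "\<dots> \<le> 2 powr (log 2 N + 1)"
    using nbits by (intro powr_mono) linarith+
  also have "\<dots> = 2 * real N"
    using assms by (simp add: powr_add)
  finally show "2 ^ nbits N \<le> 2 * real N" .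
qed

theorem mainTheorem1:
  "\<exists>c::real. c > 0 \<and>
     (\<forall>N::nat. \<forall>l r. N \<ge> 2 \<longrightarrow> interval_rep N l r \<longrightarrow>
        real (min_obdd_size (interleaved_order (nbits N)) (chi_E N l r))
          \<le> c * real N * log 2 (real N))"
proof (intro exI[of _ 168] conjI allI impI)
  fix N :: nat and l r :: "nat \<Rightarrow> real"
  assume N: "N \<ge> 2" and rep: "interval_rep N l r"
  have "real (min_obdd_size (interleaved_order (nbits N)) (chi_E N l r))
      \<le> real ((2 * nbits N + 1) * (14 * 2 ^ nbits N))"
    using min_obdd_size_chi_E_le[OF rep] by (rule of_nat_mono)
  also have "\<dots> = real (2 * nbits N + 1) * (14 * 2 ^ nbits N)"
    by (simp only: of_nat_mult of_nat_numeral of_nat_power)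
  also have "\<dots> \<le> (6 * log 2 N) * (14 * (2 * real N))"
    using nbits_bounds[OF N] by (intro mult_mono) auto
  finally show "real (min_obdd_size (interleaved_order (nbits N)) (chi_E N l r)) \<le> 168 * real N * log 2 N"
    by (simp add: algebra_simps)
qed simp

end
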